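(* Let $G\le\mathrm{O}(d)$ be finite and suppose $n>\chi(G)\cdot(d-1)$. Then for generic $(z_1,\ldots,z_n)\in(\mathbb{R}^d)^n$, the max filter bank $\Phi:\mathbb{R}^d/G\to\mathbb{R}^n$, $\Phi([x])=(\langle\!\langle[z_i],[x]\rangle\!\rangle)_{i=1}^n$, is bilipschitz, i.e. there exist $0<a\le b<\infty$ with $a\,d([x],[y])\le\|\Phi([x])-\Phi([y])\|\le b\,d([x],[y])$ for all $x,y\in\mathbb{R}^d$.
   Context: For $x\in\mathbb{R}^d$, $[x]:=\{gx:g\in G\}$; $d([x],[y]):=\min_{p\in[x],q\in[y]}\|p-q\|$; $\langle\!\langle[x],[y]\rangle\!\rangle:=\max_{p\in[x],q\in[y]}\langle p,q\rangle$. The open Voronoi cell $V_x$ is the set of $y$ such that $x$ is the unique maximizer of $\langle p,y\rangle$ over $p\in[x]$. $P(G):=\{x:\mathrm{stab}_G(x)=\{\mathrm{id}\}\}$, $S(x,y):=\{q\in[y]:V_q\cap V_x\ne\varnothing\}$, and the Voronoi characteristic is $\chi(G):=\max_{x,y\in P(G)}|S(x,y)|$. "Generic" means the property holds for all tuples outside a proper algebraic (hence Lebesgue-null, lower-dimensional) subset of $(\mathbb{R}^d)^n$. *)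

theory Defs
  imports "HOL-Analysis.Analysis"
begin

definition finite_orth_group :: "(real^'d^'d) set \<Rightarrow> bool" where
  "finite_orth_group G \<longleftrightarrow> finite G \<and> mat 1 \<in> G
     \<and> (\<forall>A\<in>G. \<forall>B\<in>G. A ** B \<in> G)
     \<and> (\<forall>A\<in>G. transpose A \<in> G)
     \<and> (\<forall>A\<in>G. orthogonal_matrix A)"

definition orbit :: "(real^'d^'d) set \<Rightarrow> real^'d \<Rightarrow> (real^'d) set" where
  "orbit G x = (\<lambda>A. A *v x) ` G"

definition qdist :: "(real^'d^'d) set \<Rightarrow> real^'d \<Rightarrow> real^'d \<Rightarrow> real" where
  "qdist G x y = Min {norm (p - q) | p q. p \<in> orbit G x \<and> q \<in> orbit G y}"

definition maxpair :: "(real^'d^'d) set \<Rightarrow> real^'d \<Rightarrow> real^'d \<Rightarrow> real" where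
  "maxpair G x y = Max {p \<bullet> q | p q. p \<in> orbit G x \<and> q \<in> orbit G y}"

definition voronoi :: "(real^'d^'d) set \<Rightarrow> real^'d \<Rightarrow> (real^'d) set" where
  "voronoi G x = {y. \<forall>p\<in>orbit G x. p \<noteq> x \<longrightarrow> p \<bullet> y < x \<bullet> y}"

definition principal :: "(real^'d^'d) set \<Rightarrow> (real^'d) set" where
  "principal G = {x. {A\<in>G. A *v x = x} = {mat 1}}"

definition Sset :: "(real^'d^'d) set \<Rightarrow> real^'d \<Rightarrow> real^'d \<Rightarrow> (real^'d) set" where
  "Sset G x y = {q\<in>orbit G y. voronoi G q \<inter> voronoi G x \<noteq> {}}"

definition voronoi_char :: "(real^'d^'d) set \<Rightarrow> nat" where
  "voronoi_char G = Max {card (Sset G x y) | x y. x \<in> principal G \<and> y \<in> principal G}"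

definition max_filter :: "(real^'d^'d) set \<Rightarrow> real^'d^'m \<Rightarrow> real^'d \<Rightarrow> real^'m" where
  "max_filter G z x = (\<chi> i. maxpair G (z $ i) x)"

definition bilipschitz_mf :: "(real^'d^'d) set \<Rightarrow> real^'d^'m \<Rightarrow> bool" where
  "bilipschitz_mf G z \<longleftrightarrow> (\<exists>a b. 0 < a \<and> a \<le> b \<and>
     (\<forall>x y. a * qdist G x y \<le> norm (max_filter G z x - max_filter G z y)
          \<and> norm (max_filter G z x - max_filter G z y) \<le> b * qdist G x y))"

text \<open>Generic: holds outside the zero set of a nonzero real polynomial function,
  i.e. outside a proper algebraic subset.\<close>
definition generic :: "('a::real_normed_vector \<Rightarrow> bool) \<Rightarrow> bool" where
  "generic P \<longleftrightarrow> (\<exists>p. real_polynomial_function p \<and> (\<exists>z. p z \<noteq> 0)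
                     \<and> (\<forall>z. p z \<noteq> 0 \<longrightarrow> P z))"

end

theory Submission
  imports Defs
begin

(* Call x separating if distinct points of each template orbit [z_i] have distinct inner products
   with x. For separating x and y, <<[z_i],[x]>> is attained at some P_i in [z_i], and
   <<[z_i],[y]>> = <<[P_i],[y]>> at some Q_i in [y]. As z_i has trivial stabiliser, both maxima are
   strict, so P_i lies in the open Voronoi cells of x and of Q_i, i.e. Q_i is in S(x,y).
   As |S(x,y)| <= chi(G) and n > chi(G)(d-1), some q in [y] equals Q_i for d indices i. For these,
   Phi(x)_i - Phi(y)_i = <P_i, x - q>, and the P_i are the rows of a matrix drawn from d distinct
   template orbits. For generic templates all of these finitely many matrices are invertible,
   giving c d([x],[y]) <= c |x - q| <= |Phi(x) - Phi(y)| with a uniform c > 0. Separating points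
   are dense and both sides are continuous, so this holds for all x, y. The upper bound holds
   because each component of Phi is |z_i|-Lipschitz for d. The genericity conditions (trivial
   stabilisers of the z_i, invertibility of the frames) amount to the non-vanishing of a product
   of polynomials in z. *)

lemma inner_matrix_vector_transpose:
  "((A::real^'n^'n) *v x) \<bullet> y = x \<bullet> (transpose A *v y)"
  by (metis dot_lmul_matrix vector_transpose_matrix)

lemma orthogonal_matrix_inner:
  "orthogonal_matrix (A::real^'n^'n) \<Longrightarrow> (A *v x) \<bullet> (A *v y) = x \<bullet> y"
  by (simp add: inner_matrix_vector_transpose matrix_vector_mul_assoc orthogonal_matrix_def)

lemma orthogonal_matrix_norm:
  "orthogonal_matrix (A::real^'n^'n) \<Longrightarrow> norm (A *v x) = norm x"
  by (simp add: norm_eq_sqrt_inner orthogonal_matrix_inner)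

lemma orthogonal_matrix_transpose_cancel:
  "orthogonal_matrix (A::real^'n^'n) \<Longrightarrow> transpose A *v (A *v x) = x"
  "orthogonal_matrix (A::real^'n^'n) \<Longrightarrow> A *v (transpose A *v x) = x"
  by (simp_all only: matrix_vector_mul_assoc orthogonal_matrix_def matrix_vector_mul_lid)

lemma norm_le_if_reindex:
  fixes u :: "real^'n" and v :: "real^'m"
  assumes k: "inj k" and uv: "\<And>j. u $ j = v $ k j"
  shows "norm u \<le> norm v"
proof -
  have "(\<Sum>j\<in>UNIV. (u $ j)\<^sup>2) = (\<Sum>i\<in>range k. (v $ i)\<^sup>2)"
    using sum.reindex[OF k, of "\<lambda>i. (v $ i)\<^sup>2"] uv by simp
  also have "\<dots> \<le> (\<Sum>i\<in>UNIV. (v $ i)\<^sup>2)" by (intro sum_mono2) auto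
  finally show ?thesis by (simp add: norm_vec_def L2_set_def)
qed

lemma finite_vec_components:
  assumes "finite S" shows "finite {v :: 'a^'n. \<forall>j. v $ j \<in> S}"
proof -
  have "{v :: 'a^'n. \<forall>j. v $ j \<in> S} \<subseteq> vec_lambda ` PiE UNIV (\<lambda>_. S)"
  proof
    fix v :: "'a^'n" assume "v \<in> {v. \<forall>j. v $ j \<in> S}"
    then have "vec_nth v \<in> PiE UNIV (\<lambda>_. S)" by (auto simp: PiE_iff)
    then show "v \<in> vec_lambda ` PiE UNIV (\<lambda>_. S)" by (metis image_eqI vec_lambda_eta)
  qed
  moreover have "finite (PiE (UNIV :: 'n set) (\<lambda>_. S))" using assms by (intro finite_PiE) auto
  ultimately show ?thesis using finite_subset by blast
qed

lemma nonsingular_matrix_bounded_below: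
  fixes M :: "real^'n^'n" assumes "det M \<noteq> 0"
  shows "\<exists>e>0. \<forall>v. e * norm v \<le> norm (M *v v)"
proof -
  obtain B where B: "B ** M = mat 1" using assms invertible_det_nz invertible_left_inverse by blast
  have "v = 0" if "M *v v = 0" for v
  proof -
    have "v = B *v (M *v v)" by (simp add: matrix_vector_mul_assoc B)
    then show ?thesis using that by simp
  qed
  then obtain e where "e > 0" "\<forall>v. e * norm v \<le> norm (M *v v)"
    using injective_imp_isometric[OF closed_UNIV subspace_UNIV matrix_vector_mul_bounded_linear]
    by (metis UNIV_I)
  then show ?thesis by blast
qed

lemma finite_nonsingular_bounded_below:
  fixes S :: "(real^'n^'n) set"
  assumes "finite S" and "\<And>M. M \<in> S \<Longrightarrow> det M \<noteq> 0"
  obtains c where "c > 0" and "\<And>M v. M \<in> S \<Longrightarrow> c * norm v \<le> norm (M *v v)"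
proof -
  obtain e where e: "\<And>M. M \<in> S \<Longrightarrow> e M > 0 \<and> (\<forall>v. e M * norm v \<le> norm (M *v v))"
    using nonsingular_matrix_bounded_below assms(2) by metis
  define c where "c = Min (insert 1 (e ` S))"
  have "c > 0" unfolding c_def using assms(1) e by (subst Min_gr_iff) auto
  moreover have "c * norm v \<le> norm (M *v v)" if "M \<in> S" for M v
  proof -
    have "c \<le> e M" unfolding c_def using assms(1) that by (intro Min_le) auto
    then have "c * norm v \<le> e M * norm v" by (simp add: mult_right_mono)
    then show ?thesis using e[OF that] by (meson order_trans)
  qed
  ultimately show thesis using that by blast
qed

lemma closure_inner_nonzero:
  fixes W :: "'a::euclidean_space set"
  assumes "finite W" and "0 \<notin> W"
  shows "closure {x. \<forall>w\<in>W. w \<bullet> x \<noteq> 0} = UNIV"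
proof -
  define H where "H = (\<Union>w\<in>W. {x. w \<bullet> x = 0})"
  have "negligible H"
    unfolding H_def using assms by (intro negligible_Union) (auto intro!: negligible_hyperplane)
  then have "interior H = {}"
    by (metis interior_subset negligible_subset open_interior open_not_negligible)
  then have "closure (- H) = UNIV" by (simp add: closure_complement)
  moreover have "- H = {x. \<forall>w\<in>W. w \<bullet> x \<noteq> 0}" unfolding H_def by auto
  ultimately show ?thesis by simp
qed

lemma obtain_inj_into_fiber:
  fixes f :: "'m::finite \<Rightarrow> 'b"
  assumes S: "finite S" "\<And>i. f i \<in> S" and big: "card S * (CARD('d::finite) - 1) < CARD('m)"
  obtains s and k :: "'d::finite \<Rightarrow> 'm" where "s \<in> S" and "inj k" and "\<And>j. f (k j) = s"
proof -
  obtain s where s: "s \<in> S" and "CARD('m) \<le> card (f -` {s}) * card S"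
    using pigeonhole_card[of f UNIV S] S by auto
  with big have "card S * (CARD('d) - 1) < card S * card (f -` {s})"
    by (metis mult.commute order_less_le_trans)
  then have "CARD('d) - 1 < card (f -` {s})" by (simp only: mult_less_cancel1)
  then have "CARD('d) \<le> card (f -` {s})" by simp
  then obtain k :: "'d \<Rightarrow> 'm" where "k ` UNIV \<subseteq> f -` {s}" "inj k"
    using card_le_inj[of "UNIV :: 'd set" "f -` {s}"] by auto
  then show thesis using that s by blast
qed

lemma finite_zeros_real_polynomial_function:
  fixes h :: "real \<Rightarrow> real"
  assumes "real_polynomial_function h" and "h t \<noteq> 0"
  shows "finite {t. h t = 0}"
proof -
  obtain c n where h: "h = (\<lambda>x. \<Sum>i\<le>n. c i * x ^ i)"
    using assms(1) real_polynomial_function_iff_sum by blast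
  have "\<exists>i\<le>n. c i \<noteq> 0"
  proof (rule ccontr)
    assume "\<not> (\<exists>i\<le>n. c i \<noteq> 0)"
    then have "h t = 0" unfolding h by simp
    with assms(2) show False by contradiction
  qed
  then show ?thesis unfolding h using polyfun_finite_roots by blast
qed

lemma real_polynomial_function_mult_nonzero:
  fixes p q :: "'a::real_normed_vector \<Rightarrow> real"
  assumes p: "real_polynomial_function p" "p a \<noteq> 0"
    and q: "real_polynomial_function q" "q b \<noteq> 0"
  shows "\<exists>x. p x * q x \<noteq> 0"
proof -
  define l where "l = (\<lambda>t::real. a + t *\<^sub>R (b - a))"
  have "polynomial_function l" unfolding l_def by (intro polynomial_function_add polynomial_function_mult) auto
  then have "real_polynomial_function (p \<circ> l)" and "real_polynomial_function (q \<circ> l)"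
    using p(1) q(1) by auto
  moreover have "(p \<circ> l) 0 \<noteq> 0" and "(q \<circ> l) 1 \<noteq> 0" using p(2) q(2) by (simp_all add: l_def)
  ultimately have "finite ({t. (p \<circ> l) t = 0} \<union> {t. (q \<circ> l) t = 0})"
    using finite_zeros_real_polynomial_function by blast
  then obtain t where "t \<notin> {t. (p \<circ> l) t = 0} \<union> {t. (q \<circ> l) t = 0}"
    using ex_new_if_finite[OF infinite_UNIV_char_0] by blast
  then show ?thesis by auto
qed

lemma genericI:
  assumes "real_polynomial_function p" and "p a \<noteq> 0" and "\<And>z. p z \<noteq> 0 \<Longrightarrow> P z"
  shows "generic P"
  unfolding generic_def using assms by blast

lemma generic_mono: "generic P \<Longrightarrow> (\<And>z. P z \<Longrightarrow> Q z) \<Longrightarrow> generic Q"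
  unfolding generic_def by blast

lemma generic_conj:
  assumes "generic P" and "generic Q"
  shows "generic (\<lambda>z. P z \<and> Q z)"
proof -
  obtain p a where p: "real_polynomial_function p" "p a \<noteq> 0" "\<And>z. p z \<noteq> 0 \<Longrightarrow> P z"
    using assms(1) unfolding generic_def by blast
  obtain q b where q: "real_polynomial_function q" "q b \<noteq> 0" "\<And>z. q z \<noteq> 0 \<Longrightarrow> Q z"
    using assms(2) unfolding generic_def by blast
  obtain c where "p c * q c \<noteq> 0" using real_polynomial_function_mult_nonzero p q by blast
  moreover have "real_polynomial_function (\<lambda>z. p z * q z)" using p(1) q(1) by auto
  ultimately show ?thesis using p(3) q(3) by (intro genericI[of "\<lambda>z. p z * q z" c]) auto
qed

lemma generic_Ball:
  assumes "finite I" and "\<And>i. i \<in> I \<Longrightarrow> generic (P i)"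
  shows "generic (\<lambda>z. \<forall>i\<in>I. P i z)"
  using assms
proof (induction I rule: finite_induct)
  case empty
  show ?case by (rule genericI[of "\<lambda>_. 1"]) auto
next
  case (insert i I)
  then have "generic (\<lambda>z. P i z \<and> (\<forall>i\<in>I. P i z))" by (intro generic_conj) auto
  then show ?case by simp
qed

lemma real_polynomial_function_det:
  assumes "\<And>i j. real_polynomial_function (\<lambda>x. f x $ i $ j)"
  shows "real_polynomial_function (\<lambda>x. det (f x))"
  unfolding det_def using assms
  by (intro real_polynomial_function_sum real_polynomial_function.intros(2,4)
      real_polynomial_function_prod) (auto simp: finite_permutations)

lemma generic_not_fixed:
  fixes A :: "real^'d^'d" and i :: "'m::finite"
  assumes "A \<noteq> mat 1"
  shows "generic (\<lambda>z :: real^'d^'m. A *v (z $ i) \<noteq> z $ i)"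
proof -
  obtain l where l: "(A - mat 1) $ l \<noteq> 0" using assms by (metis vec_eq_iff zero_index right_minus_eq)
  define r where "r = (A - mat 1) $ l"
  have "bounded_linear (\<lambda>z :: real^'d^'m. r \<bullet> z $ i)"
    using bounded_linear_compose[OF bounded_linear_inner_right bounded_linear_vec_nth] .
  then have "real_polynomial_function (\<lambda>z :: real^'d^'m. r \<bullet> z $ i)" by auto
  moreover have "r \<bullet> (\<chi> _. r :: real^'d^'m) $ i \<noteq> 0" using l unfolding r_def by simp
  moreover have "A *v (z $ i) \<noteq> z $ i" if "r \<bullet> z $ i \<noteq> 0" for z :: "real^'d^'m"
  proof
    assume "A *v (z $ i) = z $ i"
    then have "((A - mat 1) *v (z $ i)) $ l = 0" by (simp add: matrix_vector_mult_diff_rdistrib)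
    then show False using that by (simp add: matrix_vector_mul_component r_def)
  qed
  ultimately show ?thesis by (rule genericI)
qed

lemma generic_nonsingular_frame:
  fixes k :: "'d::finite \<Rightarrow> 'm::finite" and g :: "'d \<Rightarrow> real^'d^'d"
  assumes k: "inj k" and g: "\<And>j. orthogonal_matrix (g j)"
  shows "generic (\<lambda>z :: real^'d^'m. det (\<chi> j. g j *v (z $ k j)) \<noteq> 0)"
proof -
  have "bounded_linear (\<lambda>z :: real^'d^'m. (g j *v (z $ k j)) $ l)" for j l
    using bounded_linear_compose[OF bounded_linear_vec_nth
        bounded_linear_compose[OF matrix_vector_mul_bounded_linear bounded_linear_vec_nth]] .
  then have "real_polynomial_function (\<lambda>z :: real^'d^'m. det (\<chi> j. g j *v (z $ k j)))"
    by (intro real_polynomial_function_det) auto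
  moreover
  define z0 :: "real^'d^'m"
    where "z0 = (\<chi> i. if i \<in> range k then transpose (g (inv k i)) *v axis (inv k i) 1 else 0)"
  have "z0 $ k j = transpose (g j) *v axis j 1" for j unfolding z0_def using k by simp
  then have "g j *v (z0 $ k j) = axis j 1" for j using orthogonal_matrix_transpose_cancel(2)[OF g] by metis
  then have "(\<chi> j. g j *v (z0 $ k j)) = (mat 1 :: real^'d^'d)"
    by (simp add: vec_eq_iff axis_def mat_def)
  then have "det (\<chi> j. g j *v (z0 $ k j)) \<noteq> 0" by simp
  ultimately show ?thesis by (rule genericI)
qed

lemma finite_orth_groupD:
  assumes "finite_orth_group G"
  shows "finite G" and "mat 1 \<in> G" and "\<And>A B. A \<in> G \<Longrightarrow> B \<in> G \<Longrightarrow> A ** B \<in> G"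
    and "\<And>A. A \<in> G \<Longrightarrow> transpose A \<in> G" and "\<And>A. A \<in> G \<Longrightarrow> orthogonal_matrix A"
  using assms unfolding finite_orth_group_def by auto

definition frames :: "(real^'d^'d) set \<Rightarrow> real^'d^'m \<Rightarrow> (real^'d^'d) set" where
  "frames G z = {M. \<exists>k. inj k \<and> (\<forall>j. M $ j \<in> orbit G (z $ k j))}"

definition general_position :: "(real^'d^'d) set \<Rightarrow> real^'d^'m \<Rightarrow> bool" where
  "general_position G z \<longleftrightarrow> (\<forall>i. z $ i \<in> principal G) \<and> (\<forall>M\<in>frames G z. det M \<noteq> 0)"

lemma framesE:
  assumes "M \<in> frames G z"
  obtains k g where "inj k" and "g \<in> PiE UNIV (\<lambda>_. G)" and "M = (\<chi> j. g j *v (z $ k j))"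
proof -
  obtain k where k: "inj k" "\<And>j. M $ j \<in> orbit G (z $ k j)"
    using assms unfolding frames_def by blast
  then have "\<forall>j. \<exists>h. h \<in> G \<and> M $ j = h *v (z $ k j)" unfolding orbit_def by blast
  then obtain g where g: "\<And>j. g j \<in> G \<and> M $ j = g j *v (z $ k j)" by metis
  then have "M = (\<chi> j. g j *v (z $ k j))" by (simp add: vec_eq_iff)
  moreover have "g \<in> PiE UNIV (\<lambda>_. G)" using g by (simp add: PiE_iff)
  ultimately show thesis using that k(1) by blast
qed

context
  fixes G :: "(real^'d^'d) set"
  assumes G: "finite_orth_group G"
begin

lemmas finite_G = finite_orth_groupD(1)[OF G]
  and id_in_G = finite_orth_groupD(2)[OF G]
  and mult_in_G = finite_orth_groupD(3)[OF G]
  and transpose_in_G = finite_orth_groupD(4)[OF G]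
  and orthogonal_G = finite_orth_groupD(5)[OF G]

lemma orbit_self: "x \<in> orbit G x"
  unfolding orbit_def using id_in_G by force

lemma finite_orbit: "finite (orbit G x)"
  unfolding orbit_def using finite_G by blast

lemma orbit_closed: "A \<in> G \<Longrightarrow> p \<in> orbit G x \<Longrightarrow> A *v p \<in> orbit G x"
  unfolding orbit_def using mult_in_G
  by (auto simp: matrix_vector_mul_assoc)

lemma orbit_eq: "p \<in> orbit G x \<Longrightarrow> orbit G p = orbit G x"
proof -
  assume "p \<in> orbit G x"
  then obtain g where g: "g \<in> G" "p = g *v x" unfolding orbit_def by auto
  have "x = transpose g *v p"
    using g orthogonal_G orthogonal_matrix_transpose_cancel(1) by metis
  then have "x \<in> orbit G p"
    using g(1) transpose_in_G unfolding orbit_def by blast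
  show ?thesis
    using orbit_closed \<open>p \<in> orbit G x\<close> \<open>x \<in> orbit G p\<close> unfolding orbit_def by auto
qed

lemma orbit_pairs_eq:
  assumes invariant: "\<And>A p q. A \<in> G \<Longrightarrow> f (A *v p) (A *v q) = f p q"
    and p0: "p0 \<in> orbit G x"
  shows "{f p q | p q. p \<in> orbit G x \<and> q \<in> orbit G y} = f p0 ` orbit G y"
proof (intro equalityI subsetI)
  fix t assume "t \<in> {f p q | p q. p \<in> orbit G x \<and> q \<in> orbit G y}"
  then obtain p q where t: "t = f p q" and p: "p \<in> orbit G x" and q: "q \<in> orbit G y" by blast
  from p obtain g where g: "g \<in> G" "p = g *v p0"
    using orbit_eq[OF p0] unfolding orbit_def by auto
  have "t = f (g *v p0) (g *v (transpose g *v q))"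
    using t g orthogonal_G by (simp only: orthogonal_matrix_transpose_cancel)
  also have "\<dots> = f p0 (transpose g *v q)" using invariant g(1) .
  finally show "t \<in> f p0 ` orbit G y"
    using orbit_closed[OF transpose_in_G[OF g(1)] q] by blast
qed (use p0 orbit_self in blast)

lemma maxpair_eq_Max: "p \<in> orbit G x \<Longrightarrow> maxpair G x y = Max ((\<lambda>q. p \<bullet> q) ` orbit G y)"
  unfolding maxpair_def
  by (subst orbit_pairs_eq) (auto simp: orthogonal_G orthogonal_matrix_inner)

lemma qdist_eq_Min: "p \<in> orbit G x \<Longrightarrow> qdist G x y = Min ((\<lambda>q. norm (p - q)) ` orbit G y)"
  unfolding qdist_def
  by (subst orbit_pairs_eq)
    (auto simp: orthogonal_G orthogonal_matrix_norm
      simp flip: matrix_vector_mult_diff_distrib)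

lemma maxpair_ge: "p \<in> orbit G x \<Longrightarrow> q \<in> orbit G y \<Longrightarrow> p \<bullet> q \<le> maxpair G x y"
  by (simp add: maxpair_eq_Max finite_orbit)

lemma maxpair_attained:
  assumes "p \<in> orbit G x" shows "\<exists>q\<in>orbit G y. maxpair G x y = p \<bullet> q"
proof -
  have "Max ((\<lambda>q. p \<bullet> q) ` orbit G y) \<in> (\<lambda>q. p \<bullet> q) ` orbit G y"
    using orbit_self finite_orbit by (intro Max_in) auto
  then show ?thesis by (auto simp: maxpair_eq_Max[OF assms])
qed

lemma qdist_le: "q \<in> orbit G y \<Longrightarrow> qdist G x y \<le> norm (x - q)"
  by (simp add: qdist_eq_Min[OF orbit_self] finite_orbit)

lemma qdist_attained: "\<exists>q\<in>orbit G y. qdist G x y = norm (x - q)"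
proof -
  have "Min ((\<lambda>q. norm (x - q)) ` orbit G y) \<in> (\<lambda>q. norm (x - q)) ` orbit G y"
    using orbit_self finite_orbit by (intro Min_in) auto
  then show ?thesis by (auto simp: qdist_eq_Min[OF orbit_self])
qed

lemma maxpair_commute: "maxpair G x y = maxpair G y x"
  unfolding maxpair_def by (metis (no_types, opaque_lifting) inner_commute)

lemma qdist_commute: "qdist G x y = qdist G y x"
  unfolding qdist_def by (metis (no_types, opaque_lifting) norm_minus_commute)

lemma maxpair_orbit_left: "p \<in> orbit G x \<Longrightarrow> maxpair G p y = maxpair G x y"
  unfolding maxpair_def by (simp add: orbit_eq)

lemma maxpair_orbit_right: "q \<in> orbit G y \<Longrightarrow> maxpair G x q = maxpair G x y"
  unfolding maxpair_def by (simp add: orbit_eq)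

lemma norm_orbit: "p \<in> orbit G x \<Longrightarrow> norm p = norm x"
  unfolding orbit_def using orthogonal_G orthogonal_matrix_norm by auto

lemma qdist_nonneg: "0 \<le> qdist G x y"
  using qdist_attained[of y x] by auto

lemma qdist_le_norm: "qdist G x y \<le> norm (x - y)"
  using qdist_le[OF orbit_self] .

lemma qdist_le_qdist_add: "qdist G x y \<le> qdist G x' y + norm (x - x')"
proof -
  obtain q where q: "q \<in> orbit G y" "qdist G x' y = norm (x' - q)"
    using qdist_attained by blast
  have "qdist G x y \<le> norm (x - q)" using qdist_le[OF q(1)] .
  also have "\<dots> \<le> norm (x' - q) + norm (x - x')"
    using norm_triangle_ineq[of "x' - q" "x - x'"] by simp
  finally show ?thesis using q(2) by simp
qed

lemma maxpair_diff_le: "maxpair G z x - maxpair G z y \<le> norm z * qdist G x y"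
proof -
  obtain q where q: "q \<in> orbit G y" "qdist G x y = norm (x - q)"
    using qdist_attained by blast
  obtain p where p: "p \<in> orbit G z" "maxpair G x z = x \<bullet> p"
    using maxpair_attained[OF orbit_self] by blast
  have "maxpair G z x - maxpair G z y \<le> p \<bullet> x - p \<bullet> q"
    using p maxpair_ge[OF p(1) q(1)] by (simp add: maxpair_commute inner_commute)
  also have "\<dots> \<le> norm p * norm (x - q)"
    using norm_cauchy_schwarz[of p "x - q"] by (simp add: inner_diff_right)
  finally show ?thesis using q(2) norm_orbit p(1) by simp
qed

lemma abs_maxpair_diff_le: "\<bar>maxpair G z x - maxpair G z y\<bar> \<le> norm z * qdist G x y"
  using maxpair_diff_le[of z x y] maxpair_diff_le[of z y x] by (simp add: qdist_commute[of y x])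

lemma norm_max_filter_diff_le:
  "norm (max_filter G z x - max_filter G z y) \<le> (\<Sum>i\<in>UNIV. norm (z $ i)) * qdist G x y"
proof -
  have "norm (max_filter G z x - max_filter G z y)
      \<le> (\<Sum>i\<in>UNIV. \<bar>maxpair G (z $ i) x - maxpair G (z $ i) y\<bar>)"
    using norm_le_l1_cart[of "max_filter G z x - max_filter G z y"] by (simp add: max_filter_def)
  also have "\<dots> \<le> (\<Sum>i\<in>UNIV. norm (z $ i) * qdist G x y)"
    by (intro sum_mono abs_maxpair_diff_le)
  finally show ?thesis by (simp add: sum_distrib_right)
qed

lemma continuous_on_qdist: "continuous_on UNIV (\<lambda>x. qdist G x y)"
proof (rule lipschitz_on_continuous_on)
  show "1-lipschitz_on UNIV (\<lambda>x. qdist G x y)"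
  proof (intro lipschitz_onI)
    fix x x' :: "real^'d"
    show "dist (qdist G x y) (qdist G x' y) \<le> 1 * dist x x'"
      using qdist_le_qdist_add[of x y x'] qdist_le_qdist_add[of x' y x]
      by (simp add: dist_real_def dist_norm norm_minus_commute abs_le_iff)
  qed simp
qed

lemma continuous_on_max_filter: "continuous_on UNIV (max_filter G z)"
proof (rule lipschitz_on_continuous_on)
  show "(\<Sum>i\<in>UNIV. norm (z $ i))-lipschitz_on UNIV (max_filter G z)"
  proof (intro lipschitz_onI)
    fix x y :: "real^'d"
    have "dist (max_filter G z x) (max_filter G z y) \<le> (\<Sum>i\<in>UNIV. norm (z $ i)) * qdist G x y"
      using norm_max_filter_diff_le by (simp add: dist_norm)
    also have "\<dots> \<le> (\<Sum>i\<in>UNIV. norm (z $ i)) * dist x y"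
      using qdist_le_norm by (intro mult_left_mono) (auto simp: dist_norm sum_nonneg)
    finally show "dist (max_filter G z x) (max_filter G z y) \<le> (\<Sum>i\<in>UNIV. norm (z $ i)) * dist x y" .
  qed (simp add: sum_nonneg)
qed

lemma principal_iff: "x \<in> principal G \<longleftrightarrow> (\<forall>A\<in>G. A *v x = x \<longrightarrow> A = mat 1)"
  unfolding principal_def using id_in_G by auto

lemma principal_cancel:
  assumes x: "x \<in> principal G" and g: "g \<in> G" and h: "h \<in> G" and eq: "g *v x = h *v x"
  shows "g = h"
proof -
  have "(transpose h ** g) *v x = x"
    using eq orthogonal_G[OF h]
    by (simp only: matrix_vector_mul_assoc[symmetric] orthogonal_matrix_transpose_cancel)
  then have "transpose h ** g = mat 1"
    using x g h mult_in_G transpose_in_G unfolding principal_iff by blast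
  then have "h ** (transpose h ** g) = h" by simp
  then show ?thesis
    using orthogonal_G[OF h] by (simp add: matrix_mul_assoc orthogonal_matrix_def)
qed

lemma principal_orbit:
  assumes x: "x \<in> principal G" and p: "p \<in> orbit G x"
  shows "p \<in> principal G"
  unfolding principal_iff
proof (intro ballI impI)
  fix B assume B: "B \<in> G" "B *v p = p"
  obtain g where g: "g \<in> G" "p = g *v x" using p unfolding orbit_def by auto
  have "(B ** g) *v x = g *v x" using B(2) g(2) by (simp add: matrix_vector_mul_assoc)
  then have "B ** g = g" using principal_cancel[OF x] mult_in_G[OF B(1) g(1)] g(1) by blast
  then have "B ** (g ** transpose g) = g ** transpose g" by (simp add: matrix_mul_assoc)
  then show "B = mat 1" using orthogonal_G[OF g(1)] by (simp add: orthogonal_matrix_def)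
qed

lemma principal_if_inj_on_inner:
  assumes z: "z \<in> principal G" and sep: "inj_on (\<lambda>p. p \<bullet> x) (orbit G z)"
  shows "x \<in> principal G"
  unfolding principal_iff
proof (intro ballI impI)
  fix A assume A: "A \<in> G" "A *v x = x"
  have At: "transpose A \<in> G" using transpose_in_G[OF A(1)] .
  have "(transpose A *v z) \<bullet> x = z \<bullet> x"
    using A(2) inner_matrix_vector_transpose[of "transpose A" z x] by simp
  then have "transpose A *v z = mat 1 *v z"
    using inj_onD[OF sep] orbit_closed[OF At orbit_self] orbit_self by simp
  then have "transpose A = mat 1"
    using principal_cancel[OF z At id_in_G] by blast
  then show "A = mat 1" by (metis transpose_mat transpose_transpose)
qed

lemma inj_on_inner_orbit:
  assumes z: "z \<in> principal G" and sep: "inj_on (\<lambda>p. p \<bullet> x) (orbit G z)"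
  shows "inj_on (\<lambda>q. q \<bullet> z) (orbit G x)"
proof (rule inj_onI)
  fix q q' assume "q \<in> orbit G x" "q' \<in> orbit G x" and eq: "q \<bullet> z = q' \<bullet> z"
  then obtain g h where g: "g \<in> G" "q = g *v x" and h: "h \<in> G" "q' = h *v x"
    unfolding orbit_def by auto
  have gt: "transpose g \<in> G" and ht: "transpose h \<in> G"
    using transpose_in_G g h by auto
  have "(transpose g *v z) \<bullet> x = (transpose h *v z) \<bullet> x"
    using eq g h inner_matrix_vector_transpose[of "transpose g" z x]
      inner_matrix_vector_transpose[of "transpose h" z x]
    by (simp add: inner_commute)
  then have "transpose g *v z = transpose h *v z"
    using inj_onD[OF sep] orbit_closed[OF gt orbit_self] orbit_closed[OF ht orbit_self]
    by blast
  then have "transpose g = transpose h" using principal_cancel[OF z gt ht] by blast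
  then show "q = q'" using g h by (metis transpose_transpose)
qed

lemma maximizer_in_voronoi:
  assumes sep: "inj_on (\<lambda>p. p \<bullet> v) (orbit G x)" and max: "x \<bullet> v = maxpair G x v"
  shows "v \<in> voronoi G x"
  unfolding voronoi_def
proof (intro CollectI ballI impI)
  fix p assume p: "p \<in> orbit G x" "p \<noteq> x"
  have "p \<bullet> v \<le> x \<bullet> v" using maxpair_ge[OF p(1) orbit_self] max by simp
  moreover have "p \<bullet> v \<noteq> x \<bullet> v" using inj_onD[OF sep _ p(1) orbit_self] p(2) by blast
  ultimately show "p \<bullet> v < x \<bullet> v" by simp
qed

lemma card_Sset_le:
  assumes "x \<in> principal G" "y \<in> principal G"
  shows "finite (Sset G x y)" and "card (Sset G x y) \<le> voronoi_char G"
proof -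
  have sub: "Sset G x' y' \<subseteq> orbit G y'" for x' y' unfolding Sset_def by auto
  show "finite (Sset G x y)" using finite_subset[OF sub finite_orbit] .
  have "card (Sset G x' y') \<le> card G" for x' y'
  proof -
    have "card (Sset G x' y') \<le> card (orbit G y')" using card_mono[OF finite_orbit sub] .
    also have "\<dots> \<le> card G"
      unfolding orbit_def using card_image_le[OF finite_G] .
    finally show ?thesis .
  qed
  then have "{card (Sset G x y) | x y. x \<in> principal G \<and> y \<in> principal G} \<subseteq> {..card G}"
    by auto
  then have "finite {card (Sset G x y) | x y. x \<in> principal G \<and> y \<in> principal G}"
    using finite_subset by blast
  then show "card (Sset G x y) \<le> voronoi_char G"
    unfolding voronoi_char_def using assms by (intro Max_ge) auto
qed

lemma finite_frames: "finite (frames G z)"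
proof -
  have "frames G z \<subseteq> {M. \<forall>j. M $ j \<in> (\<Union>i. orbit G (z $ i))}" unfolding frames_def by blast
  moreover have "finite (\<Union>i. orbit G (z $ i))" using finite_orbit by (intro finite_UN_I) auto
  ultimately show ?thesis using finite_vec_components finite_subset by blast
qed

lemma max_filter_witnesses:
  assumes z: "\<And>i. z $ i \<in> principal G"
    and x: "\<And>i. inj_on (\<lambda>p. p \<bullet> x) (orbit G (z $ i))"
    and y: "\<And>i. inj_on (\<lambda>p. p \<bullet> y) (orbit G (z $ i))"
  obtains P Q where "\<And>i. P i \<in> orbit G (z $ i)" and "\<And>i. Q i \<in> Sset G x y"
    and "\<And>i. max_filter G z x $ i = P i \<bullet> x" and "\<And>i. max_filter G z y $ i = P i \<bullet> Q i"
proof -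
  have "\<exists>P Q. P \<in> orbit G (z $ i) \<and> Q \<in> Sset G x y
          \<and> maxpair G (z $ i) x = P \<bullet> x \<and> maxpair G (z $ i) y = P \<bullet> Q" for i
  proof -
    obtain P where P: "P \<in> orbit G (z $ i)" "maxpair G x (z $ i) = x \<bullet> P"
      using maxpair_attained[OF orbit_self] by blast
    obtain Q where Q: "Q \<in> orbit G y" "maxpair G P y = P \<bullet> Q"
      using maxpair_attained[OF orbit_self] by blast
    have principal_P: "P \<in> principal G" using principal_orbit[OF z P(1)] .
    have orbit_P: "orbit G P = orbit G (z $ i)" using orbit_eq[OF P(1)] .
    have "P \<in> voronoi G x"
    proof (rule maximizer_in_voronoi)
      show "inj_on (\<lambda>p. p \<bullet> P) (orbit G x)"
        using inj_on_inner_orbit[OF principal_P] x orbit_P by simp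
      show "x \<bullet> P = maxpair G x P" using P(2) maxpair_orbit_right[OF P(1)] by simp
    qed
    moreover have "P \<in> voronoi G Q"
    proof (rule maximizer_in_voronoi)
      show "inj_on (\<lambda>p. p \<bullet> P) (orbit G Q)"
        using inj_on_inner_orbit[OF principal_P] y orbit_P orbit_eq[OF Q(1)] by simp
      show "Q \<bullet> P = maxpair G Q P"
        using Q(2) maxpair_orbit_left[OF Q(1)] maxpair_commute[of y P]
        by (simp add: inner_commute)
    qed
    ultimately have "Q \<in> Sset G x y" using Q(1) unfolding Sset_def by blast
    moreover have "maxpair G (z $ i) x = P \<bullet> x"
      using P(2) maxpair_commute by (simp add: inner_commute)
    moreover have "maxpair G (z $ i) y = P \<bullet> Q" using Q(2) maxpair_orbit_left[OF P(1)] by simp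
    ultimately show ?thesis using P(1) by blast
  qed
  then obtain P Q where PQ: "\<And>i. P i \<in> orbit G (z $ i) \<and> Q i \<in> Sset G x y
          \<and> maxpair G (z $ i) x = P i \<bullet> x \<and> maxpair G (z $ i) y = P i \<bullet> Q i"
    by metis
  show thesis by (rule that[of P Q]) (simp_all add: max_filter_def PQ)
qed

lemma max_filter_lower_bound_separated:
  assumes big: "voronoi_char G * (CARD('d) - 1) < CARD('m)"
    and z: "general_position G (z :: real^'d^'m)"
    and c: "\<And>M v. M \<in> frames G z \<Longrightarrow> c * norm v \<le> norm (M *v v)" and c0: "0 \<le> c"
    and x: "\<And>i. inj_on (\<lambda>p. p \<bullet> x) (orbit G (z $ i))"
    and y: "\<And>i. inj_on (\<lambda>p. p \<bullet> y) (orbit G (z $ i))"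
  shows "c * qdist G x y \<le> norm (max_filter G z x - max_filter G z y)"
proof -
  have principal_z: "\<And>i. z $ i \<in> principal G" using z unfolding general_position_def by blast
  obtain P Q where P: "\<And>i. P i \<in> orbit G (z $ i)" and Q: "\<And>i. Q i \<in> Sset G x y"
    and Fx: "\<And>i. max_filter G z x $ i = P i \<bullet> x" and Fy: "\<And>i. max_filter G z y $ i = P i \<bullet> Q i"
    using max_filter_witnesses[OF principal_z x y] by blast
  have "x \<in> principal G" "y \<in> principal G"
    using principal_if_inj_on_inner[OF principal_z x] principal_if_inj_on_inner[OF principal_z y] .
  then have finite_S: "finite (Sset G x y)" and "card (Sset G x y) \<le> voronoi_char G"
    using card_Sset_le by blast+
  then have "card (Sset G x y) * (CARD('d) - 1) < CARD('m)"
    using big by (meson le_less_trans mult_le_mono1)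
  then obtain q and k :: "'d \<Rightarrow> 'm" where q: "q \<in> Sset G x y" and k: "inj k" "\<And>j. Q (k j) = q"
    using obtain_inj_into_fiber[where f = Q, OF finite_S Q] by metis
  define M where "M = (\<chi> j. P (k j))"
  have "M \<in> frames G z" unfolding frames_def M_def using k(1) P by (intro CollectI exI[of _ k]) simp
  have "q \<in> orbit G y" using q unfolding Sset_def by blast
  then have "c * qdist G x y \<le> c * norm (x - q)"
    using qdist_le c0 by (intro mult_left_mono)
  also have "\<dots> \<le> norm (M *v (x - q))" using c[OF \<open>M \<in> frames G z\<close>] .
  also have "\<dots> \<le> norm (max_filter G z x - max_filter G z y)"
  proof (rule norm_le_if_reindex[OF k(1)])
    fix j
    show "(M *v (x - q)) $ j = (max_filter G z x - max_filter G z y) $ k j"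
      unfolding M_def matrix_vector_mul_component using Fx Fy k(2) by (simp add: inner_diff_right)
  qed
  finally show ?thesis .
qed

lemma closure_separating: "closure {x. \<forall>i. inj_on (\<lambda>p. p \<bullet> x) (orbit G (z $ i))} = UNIV"
proof -
  define W where "W = {p - q | p q. \<exists>i. p \<in> orbit G (z $ i) \<and> q \<in> orbit G (z $ i) \<and> p \<noteq> q}"
  define Z where "Z = (\<Union>i. orbit G (z $ i))"
  have "W \<subseteq> (\<lambda>(p, q). p - q) ` (Z \<times> Z)" unfolding W_def Z_def by blast
  moreover have "finite Z" unfolding Z_def using finite_orbit by (intro finite_UN_I) auto
  ultimately have "finite W" by (meson finite_SigmaI finite_imageI finite_subset)
  moreover have "0 \<notin> W" unfolding W_def by auto
  ultimately have "closure {x. \<forall>w\<in>W. w \<bullet> x \<noteq> 0} = UNIV" by (rule closure_inner_nonzero)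
  moreover have sub: "{x. \<forall>w\<in>W. w \<bullet> x \<noteq> 0} \<subseteq> {x. \<forall>i. inj_on (\<lambda>p. p \<bullet> x) (orbit G (z $ i))}"
  proof (intro subsetI CollectI allI inj_onI)
    fix x i p q assume "x \<in> {x. \<forall>w\<in>W. w \<bullet> x \<noteq> 0}" and pq: "p \<in> orbit G (z $ i)" "q \<in> orbit G (z $ i)"
      and "p \<bullet> x = q \<bullet> x"
    then have "(p - q) \<bullet> x = 0" by (simp add: inner_diff_left)
    then have "p - q \<notin> W" using \<open>x \<in> {x. \<forall>w\<in>W. w \<bullet> x \<noteq> 0}\<close> by blast
    then show "p = q" using pq unfolding W_def by blast
  qed
  ultimately show ?thesis using closure_mono by blast
qed

lemma max_filter_lower_bound:
  assumes big: "voronoi_char G * (CARD('d) - 1) < CARD('m)"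
    and z: "general_position G (z :: real^'d^'m)"
    and c: "\<And>M v. M \<in> frames G z \<Longrightarrow> c * norm v \<le> norm (M *v v)" and c0: "0 \<le> c"
  shows "c * qdist G x y \<le> norm (max_filter G z x - max_filter G z y)"
proof -
  let ?F = "max_filter G z"
  let ?S = "{x. \<forall>i. inj_on (\<lambda>p. p \<bullet> x) (orbit G (z $ i))}"
  have extend: "0 \<le> f x" if "continuous_on UNIV f" and "\<And>x. x \<in> ?S \<Longrightarrow> 0 \<le> f x"
    for f :: "real^'d \<Rightarrow> real" and x
    using continuous_ge_on_closure[where S = ?S and f = f and a = 0, unfolded closure_separating]
      that by blast
  have gap_cont: "continuous_on UNIV (\<lambda>x. norm (?F x - ?F y) - c * qdist G x y)" for y
    using continuous_on_max_filter continuous_on_qdist by (intro continuous_intros)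
  have lower_left: "c * qdist G x y \<le> norm (?F x - ?F y)" if "y \<in> ?S" for x y
    using extend[OF gap_cont, of y x] max_filter_lower_bound_separated[OF big z c c0] that by simp
  have "0 \<le> norm (?F y - ?F x) - c * qdist G y x"
  proof (rule extend[OF gap_cont])
    fix y' assume "y' \<in> ?S"
    then show "0 \<le> norm (?F y' - ?F x) - c * qdist G y' x"
      using lower_left[of y' x] by (simp add: qdist_commute[of x y'] norm_minus_commute)
  qed
  then show ?thesis by (simp add: qdist_commute[of y x] norm_minus_commute)
qed

end

lemma generic_general_position:
  fixes G :: "(real^'d^'d) set"
  assumes G: "finite_orth_group G"
  shows "generic (general_position G :: real^'d^'m \<Rightarrow> bool)"
proof -
  note fin = finite_orth_groupD(1)[OF G]
  have free: "generic (\<lambda>z :: real^'d^'m. \<forall>i\<in>UNIV. \<forall>A\<in>G - {mat 1}. A *v (z $ i) \<noteq> z $ i)"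
    using fin by (intro generic_Ball generic_not_fixed) auto
  have nonsingular: "generic (\<lambda>z :: real^'d^'m. \<forall>k\<in>{k. inj k}. \<forall>g\<in>PiE UNIV (\<lambda>_. G).
      det (\<chi> j. g j *v (z $ k j)) \<noteq> 0)"
  proof (intro generic_Ball)
    show "finite (PiE (UNIV :: 'd set) (\<lambda>_. G))" using fin by (intro finite_PiE) auto
    fix k :: "'d \<Rightarrow> 'm" and g :: "'d \<Rightarrow> real^'d^'d" assume "k \<in> {k. inj k}" and "g \<in> PiE UNIV (\<lambda>_. G)"
    then show "generic (\<lambda>z :: real^'d^'m. det (\<chi> j. g j *v (z $ k j)) \<noteq> 0)"
      using finite_orth_groupD(5)[OF G] by (intro generic_nonsingular_frame) (auto simp: PiE_iff)
  qed simp
  show ?thesis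
  proof (rule generic_mono[OF generic_conj[OF free nonsingular]])
    fix z :: "real^'d^'m"
    assume z: "(\<forall>i\<in>UNIV. \<forall>A\<in>G - {mat 1}. A *v (z $ i) \<noteq> z $ i)
      \<and> (\<forall>k\<in>{k. inj k}. \<forall>g\<in>PiE UNIV (\<lambda>_. G). det (\<chi> j. g j *v (z $ k j)) \<noteq> 0)"
    have "det M \<noteq> 0" if "M \<in> frames G z" for M
      using that z by (elim framesE) blast
    then show "general_position G z"
      unfolding general_position_def principal_iff[OF G] using z by blast
  qed
qed

lemma bilipschitz_if_general_position:
  fixes G :: "(real^'d^'d) set" and z :: "real^'d^'m"
  assumes G: "finite_orth_group G"
    and big: "voronoi_char G * (CARD('d) - 1) < CARD('m)"
    and z: "general_position G z"
  shows "bilipschitz_mf G z"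
proof -
  obtain c where c0: "c > 0" and c: "\<And>M v. M \<in> frames G z \<Longrightarrow> c * norm v \<le> norm (M *v v)"
    using finite_nonsingular_bounded_below[OF finite_frames[OF G]] z
    unfolding general_position_def by blast
  define b where "b = (\<Sum>i\<in>UNIV. norm (z $ i))"
  have upper: "norm (max_filter G z x - max_filter G z y) \<le> max c b * qdist G x y" for x y
  proof -
    have "norm (max_filter G z x - max_filter G z y) \<le> b * qdist G x y"
      unfolding b_def by (rule norm_max_filter_diff_le[OF G])
    also have "\<dots> \<le> max c b * qdist G x y" by (intro mult_right_mono qdist_nonneg[OF G]) simp
    finally show ?thesis .
  qed
  show ?thesis
    unfolding bilipschitz_mf_def
    using c0 upper max_filter_lower_bound[OF G big z c] by (intro exI[of _ c] exI[of _ "max c b"]) auto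
qed

theorem theorem31:
  fixes G :: "(real^'d^'d) set"
  assumes "finite_orth_group G"
    and "CARD('m) > voronoi_char G * (CARD('d) - 1)"
  shows "generic (\<lambda>z :: real^'d^'m. bilipschitz_mf G z)"
  using generic_mono[OF generic_general_position[OF assms(1)]]
    bilipschitz_if_general_position[OF assms(1)] assms(2) by blast

end
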